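(* Let $\phi:\mathbb{R}\to\mathbb{R}$ be any bounded loss function. Fix a true label vector $\mathbf{y}\in\{-1,+1\}^q$ and a score vector $\mathbf t\in\mathbb R^q$. If $\tilde{\mathbf y}$ is generated from $\mathbf y$ by the class-conditional multi-label noise model, then $$\mathbb{E}_{\tilde{\mathbf y}\mid\mathbf y}\big[\tilde{\mathcal L}_r(\mathbf t,\tilde{\mathbf y})\big]=\mathcal L_r(\mathbf t,\mathbf y).$$
   Context: Fix $q\ge 2$, $[q]=\{1,\dots,q\}$, label vectors $\mathbf y\in\{-1,+1\}^q$. For each $j\in[q]$ there are noise rates $\rho^j_{+1},\rho^j_{-1}\in[0,1)$ with $\rho^j_{+1}+\rho^j_{-1}<1$. Class-conditional multi-label noise model: given $\mathbf y$, each coordinate is flipped independently, $\Pr(\tilde y_j=-y_j\mid\mathbf y)=\rho^j_{y_j}$, $\Pr(\tilde y_j=y_j\mid\mathbf y)=1-\rho^j_{y_j}$, flips for different $j$ independent. Let $\kappa_j=1/(1-\rho^j_{+1}-\rho^j_{-1})$ and $\kappa_{jk}=\kappa_j\kappa_k$. The pairwise surrogate is $$\mathcal L_r(\mathbf t,\mathbf y)=\sum_{1\le j<k\le q}\Big[\mathbb 1(y_j=+1,y_k=-1)\,\phi(t_j-t_k)+\mathbb 1(y_j=-1,y_k=+1)\,\phi(t_k-t_j)\Big]$$ (pairs with $y_j=y_k$ contribute $0$). For $j<k$, $s\in\mathbb R$, $a,b\in\{-1,+1\}$ define $\tilde\psi_{jk}(s;a,b)$ by $\tilde\psi_{jk}(s;+1,-1)=\kappa_{jk}[(1-\rho^j_{-1})(1-\rho^k_{+1})\phi(s)+\rho^j_{+1}\rho^k_{-1}\phi(-s)]$;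 $\tilde\psi_{jk}(s;-1,+1)=\kappa_{jk}[(1-\rho^j_{+1})(1-\rho^k_{-1})\phi(-s)+\rho^j_{-1}\rho^k_{+1}\phi(s)]$; $\tilde\psi_{jk}(s;+1,+1)=-\kappa_{jk}[\rho^j_{+1}(1-\rho^k_{-1})\phi(-s)+\rho^k_{+1}(1-\rho^j_{-1})\phi(s)]$; $\tilde\psi_{jk}(s;-1,-1)=-\kappa_{jk}[\rho^j_{-1}(1-\rho^k_{+1})\phi(s)+\rho^k_{-1}(1-\rho^j_{+1})\phi(-s)]$. The modified loss is $\tilde{\mathcal L}_r(\mathbf t,\tilde{\mathbf y})=\sum_{1\le j<k\le q}\tilde\psi_{jk}(t_j-t_k;\tilde y_j,\tilde y_k)$. *)

theory Defs
  imports "HOL-Analysis.Analysis"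
begin

(* Label vectors y \<in> {-1,+1}^q are represented as functions nat \<Rightarrow> int on
   the index set {1..q}, extensional (value undefined outside {1..q}).
   Noise rates: rho a j = \<rho>^j_a for a \<in> {-1,+1}, j \<in> {1..q}. *)

definition label_vectors :: "nat \<Rightarrow> (nat \<Rightarrow> int) set" where
  "label_vectors q = PiE {1..q} (\<lambda>_. {-1, 1})"

definition noise_prob :: "nat \<Rightarrow> (int \<Rightarrow> nat \<Rightarrow> real) \<Rightarrow> (nat \<Rightarrow> int) \<Rightarrow> (nat \<Rightarrow> int) \<Rightarrow> real" where
  "noise_prob q rho y yt =
     (\<Prod>j\<in>{1..q}. if yt j = y j then 1 - rho (y j) j else rho (y j) j)"

definition kappa :: "(int \<Rightarrow> nat \<Rightarrow> real) \<Rightarrow> nat \<Rightarrow> real" where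
  "kappa rho j = 1 / (1 - rho 1 j - rho (-1) j)"

definition L_r :: "nat \<Rightarrow> (real \<Rightarrow> real) \<Rightarrow> (nat \<Rightarrow> real) \<Rightarrow> (nat \<Rightarrow> int) \<Rightarrow> real" where
  "L_r q \<phi> t y =
     (\<Sum>(j,k)\<in>{(j,k). 1 \<le> j \<and> j < k \<and> k \<le> q}.
        (if y j = 1 \<and> y k = -1 then \<phi> (t j - t k) else 0)
      + (if y j = -1 \<and> y k = 1 then \<phi> (t k - t j) else 0))"

definition psi_tilde :: "(real \<Rightarrow> real) \<Rightarrow> (int \<Rightarrow> nat \<Rightarrow> real) \<Rightarrow> nat \<Rightarrow> nat \<Rightarrow> real \<Rightarrow> int \<Rightarrow> int \<Rightarrow> real" where
  "psi_tilde \<phi> rho j k s a b =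
     (let kjk = kappa rho j * kappa rho k in
      if a = 1 \<and> b = -1 then
        kjk * ((1 - rho (-1) j) * (1 - rho 1 k) * \<phi> s + rho 1 j * rho (-1) k * \<phi> (-s))
      else if a = -1 \<and> b = 1 then
        kjk * ((1 - rho 1 j) * (1 - rho (-1) k) * \<phi> (-s) + rho (-1) j * rho 1 k * \<phi> s)
      else if a = 1 \<and> b = 1 then
        - kjk * (rho 1 j * (1 - rho (-1) k) * \<phi> (-s) + rho 1 k * (1 - rho (-1) j) * \<phi> s)
      else
        - kjk * (rho (-1) j * (1 - rho 1 k) * \<phi> s + rho (-1) k * (1 - rho 1 j) * \<phi> (-s)))"

definition L_r_tilde :: "nat \<Rightarrow> (real \<Rightarrow> real) \<Rightarrow> (int \<Rightarrow> nat \<Rightarrow> real) \<Rightarrow> (nat \<Rightarrow> real) \<Rightarrow> (nat \<Rightarrow> int) \<Rightarrow> real" where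
  "L_r_tilde q \<phi> rho t yt =
     (\<Sum>(j,k)\<in>{(j,k). 1 \<le> j \<and> j < k \<and> k \<le> q}. psi_tilde \<phi> rho j k (t j - t k) (yt j) (yt k))"

end

theory Submission
  imports Defs
begin

text \<open>Under the noise model the noisy labels at two distinct positions j, k are two
  independent flips, so the expected noisy loss splits into one expectation over the four
  values of a pair of labels per index pair. For each true pair this expectation is
  kappa_j kappa_k times a polynomial in the noise rates equal to
  (1 - rho_{+1}^j - rho_{-1}^j)(1 - rho_{+1}^k - rho_{-1}^k) times the clean pairwise term,
  so the kappa factors cancel exactly.\<close>

definition flip_prob :: "(int \<Rightarrow> nat \<Rightarrow> real) \<Rightarrow> nat \<Rightarrow> int \<Rightarrow> int \<Rightarrow> real" where
  "flip_prob rho i yi v = (if v = yi then 1 - rho yi i else rho yi i)"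

lemma noise_prob_eq_prod:
  "noise_prob q rho y yt = (\<Prod>i\<in>{1..q}. flip_prob rho i (y i) (yt i))"
  by (simp add: noise_prob_def flip_prob_def)

lemma sum_flip_prob:
  assumes "yi \<in> {-1, 1}"
  shows "(\<Sum>v\<in>{-1, 1}. flip_prob rho i yi v) = 1"
  using assms by (auto simp: flip_prob_def)

lemma label_vectors_coord:
  "yt \<in> label_vectors q \<Longrightarrow> j \<in> {1..q} \<Longrightarrow> yt j \<in> {-1, 1}"
  by (auto simp: label_vectors_def PiE_iff)

lemma noise_prob_pair_marginal:
  assumes y: "y \<in> label_vectors q" and jk: "j \<in> {1..q}" "k \<in> {1..q}" "j \<noteq> k"
    and ab: "a \<in> {-1, 1}" "b \<in> {-1, 1}"
  shows "(\<Sum>yt\<in>label_vectors q. noise_prob q rho y yt * of_bool (yt j = a \<and> yt k = b))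
       = flip_prob rho j (y j) a * flip_prob rho k (y k) b"
proof -
  define h where "h i v = flip_prob rho i (y i) v
      * (if i = j then of_bool (v = a) else 1) * (if i = k then of_bool (v = b) else 1)" for i v
  have "(\<Sum>yt\<in>label_vectors q. noise_prob q rho y yt * of_bool (yt j = a \<and> yt k = b))
      = (\<Sum>yt\<in>label_vectors q. \<Prod>i\<in>{1..q}. h i (yt i))"
    using jk by (intro sum.cong refl)
      (simp add: h_def prod.distrib prod.delta noise_prob_eq_prod)
  also have "\<dots> = (\<Prod>i\<in>{1..q}. \<Sum>v\<in>{-1, 1}. h i v)"
    unfolding label_vectors_def by (rule prod_sum_PiE[symmetric]) auto
  also have "\<dots> = (\<Prod>i\<in>{1..q}.
      (if i = j then flip_prob rho j (y j) a else 1) * (if i = k then flip_prob rho k (y k) b else 1))"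
  proof (rule prod.cong)
    fix i assume i: "i \<in> {1..q}"
    consider "i = j" | "i = k" | "i \<noteq> j" "i \<noteq> k" by blast
    then show "(\<Sum>v\<in>{-1, 1}. h i v) =
      (if i = j then flip_prob rho j (y j) a else 1) * (if i = k then flip_prob rho k (y k) b else 1)"
      using jk(3) ab sum_flip_prob[OF label_vectors_coord[OF y i]]
      by cases (auto simp: h_def)
  qed simp
  also have "\<dots> = flip_prob rho j (y j) a * flip_prob rho k (y k) b"
    using jk by (simp add: prod.distrib prod.delta)
  finally show ?thesis .
qed

lemma noise_prob_pair_expectation:
  fixes f :: "int \<Rightarrow> int \<Rightarrow> real"
  assumes y: "y \<in> label_vectors q" and jk: "j \<in> {1..q}" "k \<in> {1..q}" "j \<noteq> k"
  shows "(\<Sum>yt\<in>label_vectors q. noise_prob q rho y yt * f (yt j) (yt k))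
    = (\<Sum>a\<in>{-1, 1}. \<Sum>b\<in>{-1, 1}. flip_prob rho j (y j) a * flip_prob rho k (y k) b * f a b)"
proof -
  have "(\<Sum>yt\<in>label_vectors q. noise_prob q rho y yt * f (yt j) (yt k))
     = (\<Sum>yt\<in>label_vectors q. \<Sum>a\<in>{-1, 1}. \<Sum>b\<in>{-1, 1}.
          f a b * (noise_prob q rho y yt * of_bool (yt j = a \<and> yt k = b)))"
  proof (rule sum.cong)
    fix yt assume yt: "yt \<in> label_vectors q"
    have "yt j \<in> {-1, 1}" "yt k \<in> {-1, 1}"
      using label_vectors_coord[OF yt jk(1)] label_vectors_coord[OF yt jk(2)] .
    then show "noise_prob q rho y yt * f (yt j) (yt k) = (\<Sum>a\<in>{-1, 1}. \<Sum>b\<in>{-1, 1}.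
          f a b * (noise_prob q rho y yt * of_bool (yt j = a \<and> yt k = b)))"
      by (elim insertE; simp)
  qed simp
  also have "\<dots> = (\<Sum>a\<in>{-1, 1}. \<Sum>b\<in>{-1, 1}. f a b *
      (\<Sum>yt\<in>label_vectors q. noise_prob q rho y yt * of_bool (yt j = a \<and> yt k = b)))"
    by (simp add: sum_distrib_left sum.swap[of _ "label_vectors q"])
  also have "\<dots> = (\<Sum>a\<in>{-1, 1}. \<Sum>b\<in>{-1, 1}.
      f a b * (flip_prob rho j (y j) a * flip_prob rho k (y k) b))"
    by (intro sum.cong refl) (simp add: noise_prob_pair_marginal[OF y jk])
  finally show ?thesis
    by (simp add: mult.commute)
qed

lemma kappa_mult_cancel:
  "rho 1 j + rho (-1) j \<noteq> 1 \<Longrightarrow> kappa rho j * (1 - rho 1 j - rho (-1) j) = 1"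
  by (simp add: kappa_def)

lemma psi_tilde_unbiased:
  assumes "rho 1 j + rho (-1) j \<noteq> 1" "rho 1 k + rho (-1) k \<noteq> 1"
    and "yj \<in> {-1, 1}" "yk \<in> {-1, 1}"
  shows "(\<Sum>a\<in>{-1, 1}. \<Sum>b\<in>{-1, 1}.
      flip_prob rho j yj a * flip_prob rho k yk b * psi_tilde \<phi> rho j k s a b)
     = (if yj = 1 \<and> yk = -1 then \<phi> s else 0) + (if yj = -1 \<and> yk = 1 then \<phi> (-s) else 0)"
    (is "?expect = ?clean")
proof -
  have "?expect = kappa rho j * (1 - rho 1 j - rho (-1) j)
      * (kappa rho k * (1 - rho 1 k - rho (-1) k)) * ?clean"
    using assms(3,4) by (auto simp: flip_prob_def psi_tilde_def Let_def algebra_simps)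
  then show ?thesis
    by (simp add: kappa_mult_cancel assms(1,2))
qed

theorem lemma2:
  fixes q :: nat and \<phi> :: "real \<Rightarrow> real" and rho :: "int \<Rightarrow> nat \<Rightarrow> real"
    and y :: "nat \<Rightarrow> int" and t :: "nat \<Rightarrow> real"
  assumes q: "q \<ge> 2"
    and bounded: "bounded (range \<phi>)"
    and rho_nonneg: "\<And>j a. j \<in> {1..q} \<Longrightarrow> a \<in> {-1, 1} \<Longrightarrow> 0 \<le> rho a j"
    and rho_lt1: "\<And>j a. j \<in> {1..q} \<Longrightarrow> a \<in> {-1, 1} \<Longrightarrow> rho a j < 1"
    and rho_sum: "\<And>j. j \<in> {1..q} \<Longrightarrow> rho 1 j + rho (-1) j < 1"
    and y: "y \<in> label_vectors q"
  shows "(\<Sum>yt\<in>label_vectors q. noise_prob q rho y yt * L_r_tilde q \<phi> rho t yt) = L_r q \<phi> t y"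
proof -
  \<comment> \<open>Of the hypotheses only rho_sum is needed: the identity is a finite one, so neither the
    boundedness of \<phi> nor the range of the individual rates plays a role.\<close>
  let ?pairs = "{(j, k). 1 \<le> j \<and> j < k \<and> k \<le> q}"
  have pair_term: "(\<Sum>yt\<in>label_vectors q.
      noise_prob q rho y yt * psi_tilde \<phi> rho j k (t j - t k) (yt j) (yt k))
    = (if y j = 1 \<and> y k = -1 then \<phi> (t j - t k) else 0)
      + (if y j = -1 \<and> y k = 1 then \<phi> (t k - t j) else 0)"
    if "1 \<le> j" "j < k" "k \<le> q" for j k
  proof -
    from that have jk: "j \<in> {1..q}" "k \<in> {1..q}" "j \<noteq> k" by auto
    have noisy: "rho 1 j + rho (-1) j \<noteq> 1" "rho 1 k + rho (-1) k \<noteq> 1"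
      using rho_sum[OF jk(1)] rho_sum[OF jk(2)] by auto
    show ?thesis
      unfolding noise_prob_pair_expectation[OF y jk]
        psi_tilde_unbiased[OF noisy label_vectors_coord[OF y jk(1)] label_vectors_coord[OF y jk(2)]]
      by simp
  qed
  have "(\<Sum>yt\<in>label_vectors q. noise_prob q rho y yt * L_r_tilde q \<phi> rho t yt)
     = (\<Sum>(j, k)\<in>?pairs. \<Sum>yt\<in>label_vectors q.
          noise_prob q rho y yt * psi_tilde \<phi> rho j k (t j - t k) (yt j) (yt k))"
    unfolding L_r_tilde_def sum_distrib_left by (subst sum.swap) (simp add: case_prod_unfold)
  also have "\<dots> = L_r q \<phi> t y"
    unfolding L_r_def using pair_term by (intro sum.cong refl) auto
  finally show ?thesis .
qed

end
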